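(* For all $a,b\in\mathbb{B}^n$, \[ \mathrm{th}\left(\frac{h_{\mathbb{B}^n}(a,b)}{4}\right)\ge\frac{|a-b|}{\sqrt{4-|a+b|^2}}. \] Equality holds if $a=-b$.
   Context: $\mathbb{B}^n$ is the unit ball of $\mathbb{R}^n$. Hilbert metric: for distinct $a,b$ in a bounded convex domain $G\subset\mathbb{R}^n$, let $u,v$ be the intersection points of the line through $a,b$ with $\partial G$, ordered $u,a,b,v$ on the line; $h_G(a,b)=\log\frac{|u-b||a-v|}{|u-a||b-v|}$, and $h_G(a,a)=0$. *)

theory Defs
  imports "HOL-Analysis.Analysis"
begin

text \<open>For distinct a, b the line through
  a and b meets the boundary of G in u and v, ordered u, a, b, v on the line:
  u = a + t (b - a) with t \<le> 0 and v = a + t (b - a) with t \<ge> 1.\<close>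
definition hilbert_metric :: "'a::euclidean_space set \<Rightarrow> 'a \<Rightarrow> 'a \<Rightarrow> real" where
  "hilbert_metric G a b =
     (if a = b then 0
      else let u = (THE u. u \<in> frontier G \<and> (\<exists>t::real. t \<le> 0 \<and> u = a + t *\<^sub>R (b - a)));
               v = (THE v. v \<in> frontier G \<and> (\<exists>t::real. t \<ge> 1 \<and> v = a + t *\<^sub>R (b - a)))
           in ln ((norm (u - b) * norm (a - v)) / (norm (u - a) * norm (b - v))))"

end

theory Submission
  imports Defs
begin

text \<open>Write a = m - w and b = m + w with m the midpoint. Since |m + s w|^2 - 1 is a quadratic in s
  with leading coefficient |w|^2, the line m + s w leaves the unit ball at s = -\<alpha> and s = \<beta> with
  \<alpha>, \<beta> > 1, and the cross ratio defining h is R = (1 + \<alpha>)(1 + \<beta>) / ((\<alpha> - 1)(\<beta> - 1)), so that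
  tanh (h/4) = (sqrt R - 1) / (sqrt R + 1). Evaluating the quadratic at s = 0 gives
  4 - |a + b|^2 = \<alpha>\<beta> |a - b|^2, so the right-hand side is 1 / sqrt (\<alpha>\<beta>). With g = sqrt (\<alpha>\<beta>)
  the claim becomes ((g + 1) / (g - 1))^2 \<le> R, which after clearing denominators is the AM-GM
  inequality \<alpha> + \<beta> \<ge> 2 g. For a = -b the midpoint is the origin, so \<alpha> = \<beta> and AM-GM is an
  equality.\<close>

lemma tanh_ln_div_4:
  fixes R :: real
  assumes "0 < R"
  shows "tanh (ln R / 4) = (sqrt R - 1) / (sqrt R + 1)"
proof -
  have "ln R / 4 = ln (root 4 R)"
    using assms by (simp add: ln_root)
  moreover have "(root 4 R)\<^sup>2 = sqrt R"
    using assms by (simp add: sqrt_def real_root_mult_exp[of 2 2, simplified])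
  ultimately show ?thesis
    using assms tanh_ln_real[of "root 4 R"] by simp
qed

lemma tanh_ln_cross_ratio_ge:
  fixes \<alpha> \<beta> :: real
  assumes "1 < \<alpha>" "1 < \<beta>"
  shows "1 / sqrt (\<alpha> * \<beta>) \<le> tanh (ln ((1 + \<alpha>) * (1 + \<beta>) / ((\<alpha> - 1) * (\<beta> - 1))) / 4)"
proof -
  define g where "g = sqrt (\<alpha> * \<beta>)"
  define R where "R = (1 + \<alpha>) * (1 + \<beta>) / ((\<alpha> - 1) * (\<beta> - 1))"
  have g_sq: "g\<^sup>2 = \<alpha> * \<beta>" and g_gt_1: "1 < g"
    using assms by (simp_all add: g_def less_1_mult)
  have am_gm: "2 * g \<le> \<alpha> + \<beta>"
    using assms arith_geo_mean_sqrt[of \<alpha> \<beta>] by (simp add: g_def)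
  have "(1 + \<alpha>) * (1 + \<beta>) * (g - 1)\<^sup>2 - (g + 1)\<^sup>2 * ((\<alpha> - 1) * (\<beta> - 1))
      = 2 * (\<alpha> * \<beta> + 1) * (\<alpha> + \<beta> - 2 * g)"
    using g_sq by (simp add: power2_eq_square algebra_simps)
  also have "\<dots> \<ge> 0"
    using am_gm assms by simp
  finally have "((g + 1) / (g - 1))\<^sup>2 \<le> R"
    using g_gt_1 assms by (simp add: R_def divide_simps power_divide)
  then have "(g + 1) / (g - 1) \<le> sqrt R"
    by (simp add: real_le_rsqrt)
  moreover have "0 < R"
    using assms by (simp add: R_def)
  ultimately have "1 / g \<le> (sqrt R - 1) / (sqrt R + 1)"
    using g_gt_1 by (simp add: divide_simps algebra_simps add_pos_pos)
  with \<open>0 < R\<close> show ?thesis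
    by (simp add: tanh_ln_div_4 g_def R_def)
qed

lemma tanh_ln_cross_ratio_eq:
  fixes \<alpha> :: real
  assumes "1 < \<alpha>"
  shows "tanh (ln ((1 + \<alpha>) * (1 + \<alpha>) / ((\<alpha> - 1) * (\<alpha> - 1))) / 4) = 1 / sqrt (\<alpha> * \<alpha>)"
proof -
  define R where "R = (1 + \<alpha>) * (1 + \<alpha>) / ((\<alpha> - 1) * (\<alpha> - 1))"
  have "R = ((1 + \<alpha>) / (\<alpha> - 1))\<^sup>2"
    by (simp add: R_def power2_eq_square)
  then have "sqrt R = (1 + \<alpha>) / (\<alpha> - 1)" and "0 < R"
    using assms by simp_all
  then have "tanh (ln R / 4) = ((1 + \<alpha>) / (\<alpha> - 1) - 1) / ((1 + \<alpha>) / (\<alpha> - 1) + 1)"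
    by (simp add: tanh_ln_div_4)
  also have "\<dots> = 1 / sqrt (\<alpha> * \<alpha>)"
    using assms by (simp add: field_simps)
  finally show ?thesis
    by (simp add: R_def)
qed

lemma power2_norm_line_factor:
  fixes m w :: "'a::real_inner"
  assumes "norm m < 1" "w \<noteq> 0"
  obtains \<alpha> \<beta> :: real where "0 < \<alpha>" "0 < \<beta>"
    "\<And>s. (norm (m + s *\<^sub>R w))\<^sup>2 = 1 + (norm w)\<^sup>2 * (s + \<alpha>) * (s - \<beta>)"
proof
  define A B D where "A = (norm w)\<^sup>2" and "B = m \<bullet> w" and "D = B\<^sup>2 + A * (1 - (norm m)\<^sup>2)"
  have "0 < A" using assms(2) by (simp add: A_def)
  moreover have "(norm m)\<^sup>2 < 1" using assms(1) by (simp add: abs_square_less_1)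
  ultimately have "B\<^sup>2 < D" by (simp add: D_def)
  moreover have "0 < D"
    using \<open>B\<^sup>2 < D\<close> zero_le_power2[of B] by linarith
  ultimately have sqrt_D: "\<bar>B\<bar> < sqrt D" "(sqrt D)\<^sup>2 = D"
    by (simp_all add: real_less_rsqrt)
  show "0 < (sqrt D + B) / A" "0 < (sqrt D - B) / A"
    using sqrt_D \<open>0 < A\<close> by simp_all
  fix s :: real
  have "(norm (m + s *\<^sub>R w))\<^sup>2 = (norm m)\<^sup>2 + 2 * s * B + s\<^sup>2 * A"
    unfolding A_def B_def power2_norm_eq_inner by (simp add: algebra_simps inner_commute power2_eq_square)
  also have "\<dots> = 1 + A * (s + (sqrt D + B) / A) * (s - (sqrt D - B) / A)"
    using sqrt_D \<open>0 < A\<close> by (simp add: D_def field_simps power2_eq_square)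
  finally show "(norm (m + s *\<^sub>R w))\<^sup>2 = 1 + (norm w)\<^sup>2 * (s + (sqrt D + B) / A) * (s - (sqrt D - B) / A)"
    by (simp add: A_def)
qed

lemma unit_ball_chord_factor:
  fixes m w :: "'a::real_inner"
  assumes "norm (m - w) < 1" "norm (m + w) < 1" "w \<noteq> 0"
  obtains \<alpha> \<beta> :: real where "1 < \<alpha>" "1 < \<beta>"
    "\<And>s. (norm (m + s *\<^sub>R w))\<^sup>2 = 1 + (norm w)\<^sup>2 * (s + \<alpha>) * (s - \<beta>)"
proof -
  have "(m - w) + (m + w) = 2 *\<^sub>R m"
    by (simp add: scaleR_2)
  then have "norm m \<le> (norm (m - w) + norm (m + w)) / 2"
    using norm_triangle_ineq[of "m - w" "m + w"] by simp
  then have "norm m < 1"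
    using assms by simp
  then obtain \<alpha> \<beta> where "0 < \<alpha>" "0 < \<beta>"
    and quad: "\<And>s. (norm (m + s *\<^sub>R w))\<^sup>2 = 1 + (norm w)\<^sup>2 * (s + \<alpha>) * (s - \<beta>)"
    using power2_norm_line_factor assms(3) by metis
  have "(norm (m - w))\<^sup>2 < 1" "(norm (m + w))\<^sup>2 < 1"
    using assms by (simp_all add: abs_square_less_1)
  then have "(norm w)\<^sup>2 * ((\<alpha> - 1) * (1 + \<beta>)) > 0" "(norm w)\<^sup>2 * ((1 + \<alpha>) * (\<beta> - 1)) > 0"
    using quad[of "-1"] quad[of 1] by (simp_all add: algebra_simps)
  then have "1 < \<alpha>" "1 < \<beta>"
    using \<open>0 < \<alpha>\<close> \<open>0 < \<beta>\<close> by (simp_all add: zero_less_mult_iff)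
  with quad show thesis
    using that by blast
qed

lemma unit_sphere_line_iff:
  fixes m w :: "'a::real_normed_vector"
  assumes "w \<noteq> 0"
    and quad: "\<And>s. (norm (m + s *\<^sub>R w))\<^sup>2 = 1 + (norm w)\<^sup>2 * (s + \<alpha>) * (s - \<beta>)"
  shows "m + s *\<^sub>R w \<in> sphere 0 1 \<longleftrightarrow> s = - \<alpha> \<or> s = \<beta>"
proof -
  have "m + s *\<^sub>R w \<in> sphere 0 1 \<longleftrightarrow> (norm (m + s *\<^sub>R w))\<^sup>2 = 1"
    by (simp add: abs_square_eq_1)
  also have "\<dots> \<longleftrightarrow> (s + \<alpha>) * (s - \<beta>) = 0"
    using assms(1) by (simp add: quad)
  finally show ?thesis
    by (simp add: eq_neg_iff_add_eq_0)
qed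

lemma unit_ball_chord_endpoints:
  fixes m w :: "'a::real_normed_vector"
  assumes "w \<noteq> 0" "1 < \<alpha>" "1 < \<beta>"
    and quad: "\<And>s. (norm (m + s *\<^sub>R w))\<^sup>2 = 1 + (norm w)\<^sup>2 * (s + \<alpha>) * (s - \<beta>)"
  shows "(THE u. u \<in> frontier (ball 0 1) \<and> (\<exists>t::real. t \<le> 0 \<and> u = (m - w) + t *\<^sub>R ((m + w) - (m - w))))
      = m + (- \<alpha>) *\<^sub>R w" (is "?u = _")
    and "(THE v. v \<in> frontier (ball 0 1) \<and> (\<exists>t::real. t \<ge> 1 \<and> v = (m - w) + t *\<^sub>R ((m + w) - (m - w))))
      = m + \<beta> *\<^sub>R w" (is "?v = _")
proof -
  have line: "(m - w) + t *\<^sub>R ((m + w) - (m - w)) = m + (2 * t - 1) *\<^sub>R w" for t :: real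
    by (simp add: algebra_simps) (metis mult_2_right scaleR_add_left)
  note on_sphere = unit_sphere_line_iff[OF assms(1) quad]
  show "?u = m + (- \<alpha>) *\<^sub>R w"
  proof (rule the_equality)
    show "m + (- \<alpha>) *\<^sub>R w \<in> frontier (ball 0 1) \<and>
        (\<exists>t::real. t \<le> 0 \<and> m + (- \<alpha>) *\<^sub>R w = (m - w) + t *\<^sub>R ((m + w) - (m - w)))"
      unfolding line frontier_ball[OF zero_less_one] on_sphere using assms(2)
      by (intro conjI exI[of _ "(1 - \<alpha>) / 2"]) (simp_all add: field_simps)
  next
    fix u assume "u \<in> frontier (ball 0 1) \<and> (\<exists>t::real. t \<le> 0 \<and> u = (m - w) + t *\<^sub>R ((m + w) - (m - w)))"
    then obtain t where "t \<le> 0" "u = m + (2 * t - 1) *\<^sub>R w" "2 * t - 1 = - \<alpha> \<or> 2 * t - 1 = \<beta>"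
      unfolding line frontier_ball[OF zero_less_one] by (metis on_sphere)
    then show "u = m + (- \<alpha>) *\<^sub>R w"
      using assms(3) by auto
  qed
  show "?v = m + \<beta> *\<^sub>R w"
  proof (rule the_equality)
    show "m + \<beta> *\<^sub>R w \<in> frontier (ball 0 1) \<and>
        (\<exists>t::real. t \<ge> 1 \<and> m + \<beta> *\<^sub>R w = (m - w) + t *\<^sub>R ((m + w) - (m - w)))"
      unfolding line frontier_ball[OF zero_less_one] on_sphere using assms(3)
      by (intro conjI exI[of _ "(1 + \<beta>) / 2"]) (simp_all add: field_simps)
  next
    fix v assume "v \<in> frontier (ball 0 1) \<and> (\<exists>t::real. t \<ge> 1 \<and> v = (m - w) + t *\<^sub>R ((m + w) - (m - w)))"
    then obtain t where "t \<ge> 1" "v = m + (2 * t - 1) *\<^sub>R w" "2 * t - 1 = - \<alpha> \<or> 2 * t - 1 = \<beta>"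
      unfolding line frontier_ball[OF zero_less_one] by (metis on_sphere)
    then show "v = m + \<beta> *\<^sub>R w"
      using assms(2) by auto
  qed
qed

lemma hilbert_metric_unit_ball_chord:
  fixes m w :: "'a::euclidean_space"
  assumes "w \<noteq> 0" "1 < \<alpha>" "1 < \<beta>"
    and quad: "\<And>s. (norm (m + s *\<^sub>R w))\<^sup>2 = 1 + (norm w)\<^sup>2 * (s + \<alpha>) * (s - \<beta>)"
  shows "hilbert_metric (ball 0 1) (m - w) (m + w) = ln ((1 + \<alpha>) * (1 + \<beta>) / ((\<alpha> - 1) * (\<beta> - 1)))"
proof -
  have dist_line: "norm ((m + s *\<^sub>R w) - (m + r *\<^sub>R w)) = \<bar>s - r\<bar> * norm w" for s r :: real
    by (simp flip: scaleR_diff_left)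
  have "norm (m + (- \<alpha>) *\<^sub>R w - (m + w)) = (1 + \<alpha>) * norm w"
    "norm (m - w - (m + \<beta> *\<^sub>R w)) = (1 + \<beta>) * norm w"
    "norm (m + (- \<alpha>) *\<^sub>R w - (m - w)) = (\<alpha> - 1) * norm w"
    "norm (m + w - (m + \<beta> *\<^sub>R w)) = (\<beta> - 1) * norm w"
    using dist_line[of "- \<alpha>" 1] dist_line[of "- 1" \<beta>] dist_line[of "- \<alpha>" "- 1"] dist_line[of 1 \<beta>] assms(2,3)
    by simp_all
  moreover have "m - w \<noteq> m + w"
    using assms(1) by (simp add: neg_eq_iff_add_eq_0 flip: scaleR_2)
  ultimately show ?thesis
    unfolding hilbert_metric_def unit_ball_chord_endpoints[OF assms] Let_def using assms(1) by simp
qed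

lemma unit_ball_chord_ratio:
  fixes m w :: "'a::real_inner"
  assumes "w \<noteq> 0"
    and quad: "\<And>s. (norm (m + s *\<^sub>R w))\<^sup>2 = 1 + (norm w)\<^sup>2 * (s + \<alpha>) * (s - \<beta>)"
  shows "norm ((m - w) - (m + w)) / sqrt (4 - (norm ((m - w) + (m + w)))\<^sup>2) = 1 / sqrt (\<alpha> * \<beta>)"
proof -
  have "(m - w) - (m + w) = (- 2) *\<^sub>R w" "(m - w) + (m + w) = 2 *\<^sub>R m"
    by (simp_all add: scaleR_2)
  moreover have "4 - (norm (2 *\<^sub>R m))\<^sup>2 = (2 * norm w)\<^sup>2 * (\<alpha> * \<beta>)"
    using quad[of 0] by (simp add: power_mult_distrib algebra_simps)
  ultimately show ?thesis
    using assms(1) by (simp add: real_sqrt_mult)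
qed

theorem corollary3p8:
  fixes a b :: "'a::euclidean_space"
  assumes "a \<in> ball 0 1" and "b \<in> ball 0 1"
  shows "tanh (hilbert_metric (ball 0 1) a b / 4) \<ge> norm (a - b) / sqrt (4 - (norm (a + b))\<^sup>2)
         \<and> (a = - b \<longrightarrow> tanh (hilbert_metric (ball 0 1) a b / 4) = norm (a - b) / sqrt (4 - (norm (a + b))\<^sup>2))"
proof (cases "a = b")
  case True
  then show ?thesis
    by (simp add: hilbert_metric_def)
next
  case False
  define m w where "m = (1 / 2) *\<^sub>R (a + b)" and "w = (1 / 2) *\<^sub>R (b - a)"
  have ab: "a = m - w" "b = m + w"
    by (simp_all add: m_def w_def algebra_simps flip: scaleR_add_left)
  then have "w \<noteq> 0"
    using False by auto
  then obtain \<alpha> \<beta> where "1 < \<alpha>" "1 < \<beta>"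
    and quad: "\<And>s. (norm (m + s *\<^sub>R w))\<^sup>2 = 1 + (norm w)\<^sup>2 * (s + \<alpha>) * (s - \<beta>)"
    using unit_ball_chord_factor[of m w] assms ab by auto
  have "\<alpha> = \<beta>" if "a = - b"
  proof -
    have "(norm w)\<^sup>2 * ((1 + \<alpha>) * (1 - \<beta>)) = (norm w)\<^sup>2 * ((\<alpha> - 1) * (- 1 - \<beta>))"
      using quad[of 1] quad[of "- 1"] that by (simp add: m_def algebra_simps)
    then show ?thesis
      using \<open>w \<noteq> 0\<close> by (simp add: algebra_simps)
  qed
  then show ?thesis
    using hilbert_metric_unit_ball_chord[OF \<open>w \<noteq> 0\<close> \<open>1 < \<alpha>\<close> \<open>1 < \<beta>\<close> quad]
      unit_ball_chord_ratio[OF \<open>w \<noteq> 0\<close> quad]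
      tanh_ln_cross_ratio_ge[OF \<open>1 < \<alpha>\<close> \<open>1 < \<beta>\<close>] tanh_ln_cross_ratio_eq[OF \<open>1 < \<alpha>\<close>]
    by (auto simp: ab)
qed

end
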